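(* Every flexible C-loop is an ARIF loop, i.e. it satisfies $(zx)(yxy)=(z(xyx))y$ for all $x,y,z$.
   Context: A C-loop is a loop satisfying $x(y(yz))=((xy)y)z$ for all $x,y,z$. A loop is flexible if $(xy)x=x(yx)$ for all $x,y$ (so expressions such as $xyx$ are unambiguous). An ARIF loop is a flexible loop satisfying $(zx)(yxy)=(z(xyx))y$ for all $x,y,z$. *)

theory Defs
  imports Main
begin

definition loop :: "('a \<Rightarrow> 'a \<Rightarrow> 'a) \<Rightarrow> 'a \<Rightarrow> bool" where
  "loop m e \<longleftrightarrow>
     (\<forall>x. m e x = x \<and> m x e = x) \<and>
     (\<forall>a b. \<exists>!x. m a x = b) \<and>
     (\<forall>a b. \<exists>!y. m y a = b)"

definition C_loop :: "('a \<Rightarrow> 'a \<Rightarrow> 'a) \<Rightarrow> 'a \<Rightarrow> bool" where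
  "C_loop m e \<longleftrightarrow> loop m e \<and>
     (\<forall>x y z. m x (m y (m y z)) = m (m (m x y) y) z)"

definition flexible :: "('a \<Rightarrow> 'a \<Rightarrow> 'a) \<Rightarrow> bool" where
  "flexible m \<longleftrightarrow> (\<forall>x y. m (m x y) x = m x (m y x))"

definition ARIF_loop :: "('a \<Rightarrow> 'a \<Rightarrow> 'a) \<Rightarrow> 'a \<Rightarrow> bool" where
  "ARIF_loop m e \<longleftrightarrow> loop m e \<and> flexible m \<and>
     (\<forall>x y z. m (m z x) (m (m y x) y) = m (m z (m (m x y) x)) y)"

end

theory Submission
  imports Defs
begin

text \<open>Right inverses in a C-loop are two-sided and satisfy both inverse properties. Since the
  C-law reads \<open>x \<cdot> (y \<cdot> (y \<cdot> z)) = (x \<cdot> (y \<cdot> y)) \<cdot> z\<close> by right alternativity, squares are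
  middle nuclear, hence also right nuclear. Flexibility turns \<open>(y \<cdot> x) \<cdot> y\<close> into \<open>y \<cdot> p\<close> with
  \<open>p = x \<cdot> y\<close>; writing \<open>y = x\<inverse> \<cdot> p\<close>, both sides of the ARIF identity then collapse to
  \<open>z \<cdot> (p \<cdot> p)\<close>.\<close>

locale unital_C_magma =
  fixes mult :: "'a \<Rightarrow> 'a \<Rightarrow> 'a" (infixl "\<cdot>" 70) and unit :: 'a and inv :: "'a \<Rightarrow> 'a"
  assumes left_unit: "unit \<cdot> x = x"
    and right_unit: "x \<cdot> unit = x"
    and right_inverse: "x \<cdot> inv x = unit"
    and C_law: "x \<cdot> (y \<cdot> (y \<cdot> z)) = ((x \<cdot> y) \<cdot> y) \<cdot> z"
begin

lemma left_alternative: "x \<cdot> (x \<cdot> y) = (x \<cdot> x) \<cdot> y"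
  using C_law [of unit] by (simp add: left_unit)

lemma right_alternative: "(y \<cdot> x) \<cdot> x = y \<cdot> (x \<cdot> x)"
  using C_law [of _ _ unit] by (simp add: right_unit)

lemma mult_inv_cancel_left: "x \<cdot> (inv x \<cdot> z) = z"
proof -
  have absorb: "x \<cdot> (inv x \<cdot> (inv x \<cdot> z)) = inv x \<cdot> z" for z
    using C_law [of x "inv x" z] by (simp add: right_inverse left_unit)
  have "x \<cdot> (x \<cdot> (inv x \<cdot> (inv x \<cdot> z))) = (x \<cdot> x) \<cdot> ((inv x \<cdot> inv x) \<cdot> z)"
    by (simp add: left_alternative)
  also have "\<dots> = (((x \<cdot> x) \<cdot> inv x) \<cdot> inv x) \<cdot> z"
    by (simp add: C_law flip: left_alternative)
  also have "\<dots> = z"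
    by (simp flip: left_alternative add: right_inverse right_unit left_unit)
  finally show ?thesis
    by (simp add: absorb)
qed

lemma inv_inv: "inv (inv x) = x"
  using mult_inv_cancel_left [of x "inv (inv x)"] by (simp add: right_inverse right_unit)

lemma inv_mult_cancel_left: "inv x \<cdot> (x \<cdot> y) = y"
  using mult_inv_cancel_left [of "inv x"] by (simp add: inv_inv)

lemma mult_inv_cancel_right: "(y \<cdot> x) \<cdot> inv x = y"
proof -
  have "((y \<cdot> x) \<cdot> x) \<cdot> inv x = y \<cdot> x"
    using C_law [of y x "inv x"] by (simp add: right_inverse right_unit)
  then have "(y \<cdot> x) \<cdot> inv x = (((y \<cdot> x) \<cdot> x) \<cdot> inv x) \<cdot> inv x"
    by simp
  also have "\<dots> = ((y \<cdot> x) \<cdot> x) \<cdot> (inv x \<cdot> inv x)"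
    by (rule right_alternative)
  also have "\<dots> = y \<cdot> (x \<cdot> (x \<cdot> (inv x \<cdot> inv x)))"
    by (rule C_law [symmetric])
  also have "\<dots> = y"
    by (simp add: mult_inv_cancel_left right_inverse right_unit)
  finally show ?thesis .
qed

lemma inv_mult: "inv (a \<cdot> b) = inv b \<cdot> inv a"
proof -
  have "inv (a \<cdot> b) \<cdot> a = inv b"
    using inv_mult_cancel_left [of "a \<cdot> b" "inv b"] by (simp add: mult_inv_cancel_right)
  then show ?thesis
    using mult_inv_cancel_right [of "inv (a \<cdot> b)" a] by simp
qed

lemma square_middle_nuclear: "y \<cdot> ((x \<cdot> x) \<cdot> z) = (y \<cdot> (x \<cdot> x)) \<cdot> z"
  by (simp add: C_law right_alternative flip: left_alternative)

lemma middle_nuclear_imp_right_nuclear: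
  assumes middle: "\<And>a b. a \<cdot> (s \<cdot> b) = (a \<cdot> s) \<cdot> b"
  shows "(y \<cdot> z) \<cdot> s = y \<cdot> (z \<cdot> s)"
proof -
  have "a \<cdot> c = (a \<cdot> s) \<cdot> (inv s \<cdot> c)" for a c
    using middle [of a "inv s \<cdot> c"] by (simp add: mult_inv_cancel_left)
  then have "(a \<cdot> c) \<cdot> (inv c \<cdot> s) = a \<cdot> s" for a c
    using mult_inv_cancel_right [of "a \<cdot> s" "inv s \<cdot> c"] by (simp add: inv_mult inv_inv)
  from this [of "y \<cdot> z" "inv z"] show ?thesis
    by (simp add: mult_inv_cancel_right inv_inv)
qed

lemma square_right_nuclear: "(y \<cdot> z) \<cdot> (x \<cdot> x) = y \<cdot> (z \<cdot> (x \<cdot> x))"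
  by (rule middle_nuclear_imp_right_nuclear) (rule square_middle_nuclear)

lemma mult_inv_mult_square: "(z \<cdot> w) \<cdot> (inv w \<cdot> (p \<cdot> p)) = z \<cdot> (p \<cdot> p)"
  by (simp flip: square_right_nuclear add: mult_inv_cancel_right)

lemma mult_mult_inv_left_square: "(z \<cdot> (p \<cdot> x)) \<cdot> (inv x \<cdot> p) = z \<cdot> (p \<cdot> p)"
proof -
  have "inv x \<cdot> p = (inv (p \<cdot> x) \<cdot> p) \<cdot> p"
    using inv_mult_cancel_left [of "p \<cdot> x" "inv x"] by (simp add: mult_inv_cancel_right)
  then show ?thesis
    by (simp add: right_alternative mult_inv_mult_square)
qed

lemma ARIF_identity:
  assumes flexible: "\<And>x y. (x \<cdot> y) \<cdot> x = x \<cdot> (y \<cdot> x)"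
  shows "(z \<cdot> x) \<cdot> ((y \<cdot> x) \<cdot> y) = (z \<cdot> ((x \<cdot> y) \<cdot> x)) \<cdot> y"
proof -
  define p where "p = x \<cdot> y"
  have y_eq: "y = inv x \<cdot> p"
    by (simp add: p_def inv_mult_cancel_left)
  have "(y \<cdot> x) \<cdot> y = y \<cdot> p"
    by (simp add: flexible p_def)
  also have "\<dots> = (inv x \<cdot> p) \<cdot> p"
    by (simp flip: y_eq)
  also have "\<dots> = inv x \<cdot> (p \<cdot> p)"
    by (rule right_alternative)
  finally have "(y \<cdot> x) \<cdot> y = inv x \<cdot> (p \<cdot> p)" .
  then have "(z \<cdot> x) \<cdot> ((y \<cdot> x) \<cdot> y) = z \<cdot> (p \<cdot> p)"
    by (simp add: mult_inv_mult_square)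
  also have "\<dots> = (z \<cdot> (p \<cdot> x)) \<cdot> (inv x \<cdot> p)"
    by (rule mult_mult_inv_left_square [symmetric])
  also have "\<dots> = (z \<cdot> ((x \<cdot> y) \<cdot> x)) \<cdot> y"
    by (simp add: p_def inv_mult_cancel_left)
  finally show ?thesis .
qed

end

theorem lemma4p3:
  fixes m :: "'a \<Rightarrow> 'a \<Rightarrow> 'a" and e :: 'a
  assumes "C_loop m e" and "flexible m"
  shows "ARIF_loop m e"
proof -
  have loop: "loop m e" and C: "\<And>x y z. m x (m y (m y z)) = m (m (m x y) y) z"
    using assms(1) unfolding C_loop_def by auto
  have "\<forall>x. \<exists>y. m x y = e"
    using loop unfolding loop_def by metis
  then obtain inv where "\<And>x. m x (inv x) = e"
    by metis
  then interpret unital_C_magma m e inv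
    using loop C by unfold_locales (auto simp: loop_def)
  show ?thesis
    using loop assms(2) ARIF_identity unfolding ARIF_loop_def flexible_def by blast
qed

end
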